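(* Let $n,k$ be positive integers and let $Z$ be the graph with vertex set $\{z_{i,j}:1\le i\le k,\ 1\le j\le n\}$ ($k$ columns indexed by $i$, $n$ rows indexed by $j$) where, for $i<i'$, $z_{i,j}z_{i',j'}$ is an edge iff (1) $i$ is odd, $i'=i+1$ and $j>j'$; or (2) $i$ is even, $i'=i+1$ and $j\le j'$; or (3) $i$ is even, $i'$ is odd and $i'\ge i+3$. Then $Z$ is a $k$-letter graph.
   Context: Let $A$ be an alphabet with $k$ letters. A $k$-letter graph is a graph (up to isomorphism) defined by a finite word $a_1a_2\cdots a_m$ over $A$ together with a set $S\subseteq A\times A$: its vertex set is $\{1,\dots,m\}$ and its edge set is $\{pq: p<q,\ (a_p,a_q)\in S\}$. *)

theory Defs
  imports Main
begin

text \<open>A graph is given by a vertex set V and an adjacency predicate E (only its values on V matter).\<close>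

definition letter_adj :: "'b list \<Rightarrow> ('b \<times> 'b) set \<Rightarrow> nat \<Rightarrow> nat \<Rightarrow> bool" where
  "letter_adj w S p q \<longleftrightarrow>
     (p < q \<and> (w ! p, w ! q) \<in> S) \<or> (q < p \<and> (w ! q, w ! p) \<in> S)"

definition iso_letter_graph :: "'a set \<Rightarrow> ('a \<Rightarrow> 'a \<Rightarrow> bool) \<Rightarrow> 'b list \<Rightarrow> ('b \<times> 'b) set \<Rightarrow> bool" where
  "iso_letter_graph V E w S \<longleftrightarrow>
     (\<exists>f. bij_betw f V {..<length w} \<and>
          (\<forall>u\<in>V. \<forall>v\<in>V. E u v \<longleftrightarrow> letter_adj w S (f u) (f v)))"

definition k_letter_graph :: "nat \<Rightarrow> 'a set \<Rightarrow> ('a \<Rightarrow> 'a \<Rightarrow> bool) \<Rightarrow> bool" where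
  "k_letter_graph k V E \<longleftrightarrow>
     (\<exists>(A::nat set) w S. finite A \<and> card A = k \<and> set w \<subseteq> A \<and> S \<subseteq> A \<times> A \<and>
        iso_letter_graph V E w S)"

definition Z_vertices :: "nat \<Rightarrow> nat \<Rightarrow> (nat \<times> nat) set" where
  "Z_vertices n k = {(i, j). 1 \<le> i \<and> i \<le> k \<and> 1 \<le> j \<and> j \<le> n}"

definition Z_rule :: "nat \<times> nat \<Rightarrow> nat \<times> nat \<Rightarrow> bool" where
  "Z_rule u v = (case u of (i, j) \<Rightarrow> case v of (i', j') \<Rightarrow>
      (odd i \<and> i' = i + 1 \<and> j > j') \<or>
      (even i \<and> i' = i + 1 \<and> j \<le> j') \<or>
      (even i \<and> odd i' \<and> i' \<ge> i + 3))"

definition Z_adj :: "nat \<times> nat \<Rightarrow> nat \<times> nat \<Rightarrow> bool" where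
  "Z_adj u v \<longleftrightarrow> (fst u < fst v \<and> Z_rule u v) \<or> (fst v < fst u \<and> Z_rule v u)"

end

theory Submission
  imports Defs
begin

text \<open>Read the vertices row by row, each row from column 1 to column k, and label z_{i,j} by its
  column i. Two vertices of the same column are never adjacent, and whether z_{i,j} and z_{i',j'}
  are adjacent depends only on i, i' and on which of the two comes first in this reading order:
  for consecutive columns the row condition j > j' resp. j \<le> j' says exactly that, and rule (3)
  ignores the rows altogether. So Z is the letter graph of the word (1 2 ... k)^n over the
  alphabet {1..k}.\<close>

lemma iso_letter_graph_if_order_compatible:
  assumes bij: "bij_betw f V {..<length w}"
    and label: "\<And>u. u \<in> V \<Longrightarrow> w ! f u = lab u"
    and sym: "\<And>u v. E u v \<longleftrightarrow> E v u"
    and irrefl: "\<And>u. \<not> E u u"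
    and adj: "\<And>u v. u \<in> V \<Longrightarrow> v \<in> V \<Longrightarrow> f u < f v \<Longrightarrow> E u v \<longleftrightarrow> (lab u, lab v) \<in> S"
  shows "iso_letter_graph V E w S"
  unfolding iso_letter_graph_def
proof (intro exI conjI ballI)
  show "bij_betw f V {..<length w}" by (fact bij)
  fix u v assume uv: "u \<in> V" "v \<in> V"
  consider "f u < f v" | "f v < f u" | "u = v"
    using bij_betw_imp_inj_on[OF bij] uv by (metis inj_onD linorder_neqE_nat)
  then show "E u v \<longleftrightarrow> letter_adj w S (f u) (f v)"
    by cases (use uv adj sym irrefl label in \<open>auto simp: letter_adj_def\<close>)
qed

lemma mult_add_less_mult_add_iff:
  fixes a b x y k :: nat
  assumes "a < k" "b < k"
  shows "x * k + a < y * k + b \<longleftrightarrow> x < y \<or> (x = y \<and> a < b)"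
proof
  assume less: "x * k + a < y * k + b"
  have "x \<le> y"
  proof (rule ccontr)
    assume "\<not> x \<le> y"
    then have "y * k + k \<le> x * k"
      using mult_le_mono1[of "Suc y" x k] by simp
    then show False using less assms by linarith
  qed
  then show "x < y \<or> (x = y \<and> a < b)" using less by auto
next
  assume "x < y \<or> (x = y \<and> a < b)"
  then show "x * k + a < y * k + b"
  proof
    assume "x < y"
    then have "x * k + k \<le> y * k"
      using mult_le_mono1[of "Suc x" y k] by simp
    then show ?thesis using assms by linarith
  qed simp
qed

definition row_major_index :: "nat \<Rightarrow> nat \<times> nat \<Rightarrow> nat" where
  "row_major_index k u = (snd u - 1) * k + (fst u - 1)"

definition row_major_word :: "nat \<Rightarrow> nat \<Rightarrow> nat list" where
  "row_major_word n k = map (\<lambda>p. p mod k + 1) [0..<n * k]"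

lemma row_major_index_less_iff:
  assumes "(i, j) \<in> Z_vertices n k" "(i', j') \<in> Z_vertices n k"
  shows "row_major_index k (i, j) < row_major_index k (i', j') \<longleftrightarrow> j < j' \<or> (j = j' \<and> i < i')"
proof -
  have "i - 1 < k" "i' - 1 < k" using assms by (auto simp: Z_vertices_def)
  then have "row_major_index k (i, j) < row_major_index k (i', j') \<longleftrightarrow>
      j - 1 < j' - 1 \<or> (j - 1 = j' - 1 \<and> i - 1 < i' - 1)"
    unfolding row_major_index_def fst_conv snd_conv by (rule mult_add_less_mult_add_iff)
  with assms show ?thesis by (auto simp: Z_vertices_def)
qed

lemma row_major_index_div_mod:
  assumes "i - 1 < k"
  shows "row_major_index k (i, j) div k = j - 1" "row_major_index k (i, j) mod k = i - 1"
  using assms unfolding row_major_index_def fst_conv snd_conv by simp_all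

lemma row_major_index_less:
  assumes "u \<in> Z_vertices n k"
  shows "row_major_index k u < n * k"
proof -
  have "row_major_index k u < (snd u - 1) * k + k"
    using assms by (auto simp: row_major_index_def Z_vertices_def)
  also have "\<dots> \<le> n * k"
    using assms mult_le_mono1[of "Suc (snd u - 1)" n k] by (auto simp: Z_vertices_def)
  finally show ?thesis .
qed

lemma bij_betw_row_major_index:
  assumes "k \<ge> 1"
  shows "bij_betw (row_major_index k) (Z_vertices n k) {..<n * k}"
proof (rule bij_betw_byWitness[where f' = "\<lambda>p. (p mod k + 1, p div k + 1)"])
  show "\<forall>u\<in>Z_vertices n k. (row_major_index k u mod k + 1, row_major_index k u div k + 1) = u"
    by (auto simp: row_major_index_div_mod Z_vertices_def)
  show "\<forall>p\<in>{..<n * k}. row_major_index k (p mod k + 1, p div k + 1) = p"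
    by (simp add: row_major_index_def)
  show "row_major_index k ` Z_vertices n k \<subseteq> {..<n * k}"
    using row_major_index_less by blast
  show "(\<lambda>p. (p mod k + 1, p div k + 1)) ` {..<n * k} \<subseteq> Z_vertices n k"
    using assms by (auto simp: Z_vertices_def less_mult_imp_div_less Suc_leI)
qed

lemma row_major_word_nth:
  assumes "u \<in> Z_vertices n k"
  shows "row_major_word n k ! row_major_index k u = fst u"
  using assms row_major_index_less[OF assms]
  by (auto simp: row_major_word_def row_major_index_def Z_vertices_def)

lemma set_row_major_word: "set (row_major_word n k) \<subseteq> {1..k}"
  by (cases "k = 0") (auto simp: row_major_word_def Suc_leI)

definition Z_letter_rel :: "(nat \<times> nat) set" where
  "Z_letter_rel = {(a, b).
     (odd b \<and> a = b + 1) \<or> (even a \<and> b = a + 1) \<or>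
     (even a \<and> odd b \<and> b \<ge> a + 3) \<or> (even b \<and> odd a \<and> a \<ge> b + 3)}"

lemma Z_adj_sym: "Z_adj u v \<longleftrightarrow> Z_adj v u"
  by (auto simp: Z_adj_def)

lemma Z_adj_irrefl: "\<not> Z_adj u u"
  by (simp add: Z_adj_def)

lemma Z_adj_iff_letter_rel:
  assumes "j < j' \<or> (j = j' \<and> i < i')"
  shows "Z_adj (i, j) (i', j') \<longleftrightarrow> (i, i') \<in> Z_letter_rel"
  using assms by (auto simp: Z_adj_def Z_rule_def Z_letter_rel_def)

theorem lemma15:
  fixes n k :: nat
  assumes "n \<ge> 1" and "k \<ge> 1"
  shows "k_letter_graph k (Z_vertices n k) Z_adj"
proof -
  have "iso_letter_graph (Z_vertices n k) Z_adj (row_major_word n k) (Z_letter_rel \<inter> {1..k} \<times> {1..k})"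
  proof (rule iso_letter_graph_if_order_compatible[where f = "row_major_index k" and lab = fst])
    show "bij_betw (row_major_index k) (Z_vertices n k) {..<length (row_major_word n k)}"
      using bij_betw_row_major_index[OF assms(2)] by (simp add: row_major_word_def)
    fix u v assume uv: "u \<in> Z_vertices n k" "v \<in> Z_vertices n k"
      and "row_major_index k u < row_major_index k v"
    then show "Z_adj u v \<longleftrightarrow> (fst u, fst v) \<in> Z_letter_rel \<inter> {1..k} \<times> {1..k}"
      using row_major_index_less_iff Z_adj_iff_letter_rel
      by (cases u; cases v) (auto simp: Z_vertices_def)
  qed (use row_major_word_nth Z_adj_sym Z_adj_irrefl in auto)
  then show ?thesis
    unfolding k_letter_graph_def using set_row_major_word
    by (intro exI[of _ "{1..k}"] exI[of _ "row_major_word n k"]) auto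
qed

end
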